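(* Every $3$-dimensional Acaa-algebra over a field $\mathbb K$ of characteristic $0$ is isomorphic to one of the following: (1) the $3$-dimensional abelian algebra (all brackets zero); (2) the $3$-dimensional Heisenberg algebra $\mathfrak h_3$, given in a basis $\{e_1,e_2,e_3\}$ by $[e_1,e_2]=e_3$ and all other brackets of basis vectors (not determined by anticommutativity) zero.
   Context: An Acaa-algebra over a field $\mathbb K$ of characteristic $0$ is a $\mathbb K$-vector space $A$ with a bilinear product $[\cdot,\cdot]$ which is anticommutative, $[x,y]=-[y,x]$, and satisfies $[x_1,[x_2,x_3]]=[x_2,[x_3,x_1]]$ for all $x_1,x_2,x_3\in A$. Isomorphism means a linear bijection preserving the bracket. *)

theory Defs
  imports "HOL-Analysis.Analysis"
begin

definition bilinear_wrt :: "('k::field \<Rightarrow> 'v::ab_group_add \<Rightarrow> 'v) \<Rightarrow> ('v \<Rightarrow> 'v \<Rightarrow> 'v) \<Rightarrow> bool" where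
  "bilinear_wrt sc br \<longleftrightarrow>
     (\<forall>x. Vector_Spaces.linear sc sc (br x)) \<and>
     (\<forall>y. Vector_Spaces.linear sc sc (\<lambda>x. br x y))"

definition acaa_algebra :: "('k::field \<Rightarrow> 'v::ab_group_add \<Rightarrow> 'v) \<Rightarrow> ('v \<Rightarrow> 'v \<Rightarrow> 'v) \<Rightarrow> bool" where
  "acaa_algebra sc br \<longleftrightarrow>
     vector_space sc \<and> bilinear_wrt sc br \<and>
     (\<forall>x y. br x y = - br y x) \<and>
     (\<forall>x1 x2 x3. br x1 (br x2 x3) = br x2 (br x3 x1))"

definition algebra_iso ::
  "('k::field \<Rightarrow> 'v::ab_group_add \<Rightarrow> 'v) \<Rightarrow> ('v \<Rightarrow> 'v \<Rightarrow> 'v) \<Rightarrow>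
   ('k \<Rightarrow> 'w::ab_group_add \<Rightarrow> 'w) \<Rightarrow> ('w \<Rightarrow> 'w \<Rightarrow> 'w) \<Rightarrow> ('v \<Rightarrow> 'w) \<Rightarrow> bool" where
  "algebra_iso s1 br1 s2 br2 f \<longleftrightarrow>
     Vector_Spaces.linear s1 s2 f \<and> bij f \<and> (\<forall>x y. f (br1 x y) = br2 (f x) (f y))"

definition isomorphic_algebras ::
  "('k::field \<Rightarrow> 'v::ab_group_add \<Rightarrow> 'v) \<Rightarrow> ('v \<Rightarrow> 'v \<Rightarrow> 'v) \<Rightarrow>
   ('k \<Rightarrow> 'w::ab_group_add \<Rightarrow> 'w) \<Rightarrow> ('w \<Rightarrow> 'w \<Rightarrow> 'w) \<Rightarrow> bool" where
  "isomorphic_algebras s1 br1 s2 br2 \<longleftrightarrow> (\<exists>f. algebra_iso s1 br1 s2 br2 f)"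

text \<open>The model space K^3 (triples), with coordinatewise scalar multiplication;
  standard basis e1=(1,0,0), e2=(0,1,0), e3=(0,0,1).\<close>
definition kscale3 :: "'k::field \<Rightarrow> 'k \<times> 'k \<times> 'k \<Rightarrow> 'k \<times> 'k \<times> 'k" where
  "kscale3 c v = (c * fst v, c * fst (snd v), c * snd (snd v))"

definition abelian3 :: "'k::field \<times> 'k \<times> 'k \<Rightarrow> 'k \<times> 'k \<times> 'k \<Rightarrow> 'k \<times> 'k \<times> 'k" where
  "abelian3 x y = 0"

definition heis3 :: "'k::field \<times> 'k \<times> 'k \<Rightarrow> 'k \<times> 'k \<times> 'k \<Rightarrow> 'k \<times> 'k \<times> 'k" where
  "heis3 x y = (0, 0, fst x * fst (snd y) - fst (snd x) * fst y)"

end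

theory Submission
  imports Defs
begin

(* If the bracket vanishes identically the algebra is abelian. Otherwise, as 2 is invertible,
   anticommutativity and the cyclic identity give [x,[x,y]] = [x,[y,x]] = -[x,[x,y]], so
   [x,[x,y]] = 0. Choose a, b with c = [a,b] nonzero; then [a,c] = [b,c] = 0, and bracketing a
   relation x a + y b + z c = 0 with a and with b kills y and x. Hence (a, b, c) is a basis of the
   3-dimensional space, and in this basis the bracket is the Heisenberg bracket. *)

lemma isomorphic_algebras_sym:
  assumes "isomorphic_algebras s1 br1 s2 br2"
  shows "isomorphic_algebras s2 br2 s1 br1"
proof -
  obtain f where lin: "Vector_Spaces.linear s1 s2 f" and "bij f"
    and hom: "\<And>x y. f (br1 x y) = br2 (f x) (f y)"
    using assms unfolding isomorphic_algebras_def algebra_iso_def by blast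
  interpret f: Vector_Spaces.linear s1 s2 f by (fact lin)
  have inv_eq_iff: "inv f y = x \<longleftrightarrow> y = f x" for x y
    using \<open>bij f\<close> by (metis bij_inv_eq_iff)
  have f_inv_f: "f (inv f y) = y" for y
    using \<open>bij f\<close> by (simp add: bij_is_surj surj_f_inv_f)
  have "Vector_Spaces.linear s2 s1 (inv f)"
    unfolding Vector_Spaces.linear_iff
    by (simp add: inv_eq_iff f_inv_f f.add f.scale f.vs1.vector_space_axioms f.vs2.vector_space_axioms)
  moreover have "inv f (br2 x y) = br1 (inv f x) (inv f y)" for x y
    by (simp add: inv_eq_iff hom f_inv_f)
  ultimately show ?thesis
    using \<open>bij f\<close> bij_imp_bij_inv unfolding isomorphic_algebras_def algebra_iso_def by blast
qed

lemma vector_space_kscale3: "vector_space (kscale3 :: 'k::field \<Rightarrow> _)"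
  by unfold_locales (auto simp: kscale3_def algebra_simps)

fun lincomb3 :: "('k \<Rightarrow> 'v \<Rightarrow> 'v) \<Rightarrow> 'v \<Rightarrow> 'v \<Rightarrow> 'v \<Rightarrow> 'k \<times> 'k \<times> 'k \<Rightarrow> 'v::ab_group_add" where
  "lincomb3 sc a b c (x, y, z) = sc x a + sc y b + sc z c"

context vector_space
begin

lemma eq_neg_self_imp_zero:
  fixes v :: 'b
  assumes "(2::'a) \<noteq> 0" and "v = - v"
  shows "v = 0"
proof -
  have "scale 2 v = v + v"
    by (metis one_add_one scale_left_distrib scale_one)
  also have "\<dots> = 0"
    using assms(2) by (metis add.right_inverse)
  finally show ?thesis
    using assms(1) by simp
qed

lemma linear_lincomb3: "Vector_Spaces.linear kscale3 scale (lincomb3 scale a b c)"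
  unfolding Vector_Spaces.linear_iff
  by (auto simp: vector_space_kscale3 vector_space_axioms kscale3_def algebra_simps)

lemma inj_lincomb3_iff_eq_0:
  "inj (lincomb3 scale a b c) \<longleftrightarrow> (\<forall>p. lincomb3 scale a b c p = 0 \<longrightarrow> p = 0)"
proof -
  interpret vector_space_pair kscale3 scale
    by (intro vector_space_pair.intro vector_space_kscale3 vector_space_axioms)
  show ?thesis
    by (rule linear_inj_iff_eq_0[OF linear_lincomb3])
qed

lemma sum_insert3_eq_lincomb3:
  "distinct [a, b, c] \<Longrightarrow> (\<Sum>w\<in>{a, b, c}. u w *s w) = lincomb3 scale a b c (u a, u b, u c)"
  by (simp add: add.assoc)

lemma inj_lincomb3_iff:
  "inj (lincomb3 scale a b c) \<longleftrightarrow> independent {a, b, c} \<and> distinct [a, b, c]"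
proof
  assume "inj (lincomb3 scale a b c)"
  then have zero: "p = 0" if "lincomb3 scale a b c p = 0" for p
    using that inj_lincomb3_iff_eq_0 by blast
  have distinct: "distinct [a, b, c]"
    using zero[of "(1, -1, 0)"] zero[of "(0, 1, -1)"] zero[of "(1, 0, -1)"]
    by (auto simp: zero_prod_def)
  moreover have "independent {a, b, c}"
  proof (rule independent_if_scalars_zero)
    fix u v assume "(\<Sum>w\<in>{a, b, c}. u w *s w) = 0" and "v \<in> {a, b, c}"
    then have "lincomb3 scale a b c (u a, u b, u c) = 0"
      using distinct by (simp only: sum_insert3_eq_lincomb3)
    then have "(u a, u b, u c) = 0"
      by (rule zero)
    then show "u v = 0"
      using \<open>v \<in> {a, b, c}\<close> by (auto simp: zero_prod_def)
  qed simp
  ultimately show "independent {a, b, c} \<and> distinct [a, b, c]"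
    by simp
next
  assume "independent {a, b, c} \<and> distinct [a, b, c]"
  then have indep: "independent {a, b, c}" and distinct: "distinct [a, b, c]"
    by simp_all
  have "p = 0" if "lincomb3 scale a b c p = 0" for p
  proof -
    obtain x y z where p: "p = (x, y, z)"
      by (metis prod.exhaust)
    define u where "u w = (if w = a then x else if w = b then y else z)" for w
    have u: "u a = x" "u b = y" "u c = z"
      using distinct by (auto simp: u_def)
    have "(\<Sum>w\<in>{a, b, c}. u w *s w) = lincomb3 scale a b c (u a, u b, u c)"
      by (rule sum_insert3_eq_lincomb3[OF distinct])
    also have "\<dots> = 0"
      using that by (simp only: u p)
    finally have "u w = 0" if "w \<in> {a, b, c}" for w
      using independentD[OF indep, of "{a, b, c}" u w] that by simp
    then show ?thesis
      using u by (simp add: p zero_prod_def)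
  qed
  then show "inj (lincomb3 scale a b c)"
    using inj_lincomb3_iff_eq_0 by blast
qed

lemma span_eq_UNIV_if_card_eq_dim:
  assumes "independent B" and "card B = dim UNIV" and "card B \<noteq> 0"
  shows "span B = UNIV"
proof -
  obtain B0 where "UNIV \<subseteq> span B0" and "card B0 = card B"
    using basis_exists[of UNIV] assms(2) by metis
  then have "finite B" "finite B0"
    using assms(3) card.infinite by metis+
  have "v \<in> span B" for v
  proof (rule ccontr)
    assume "v \<notin> span B"
    then have "independent (insert v B)" and "v \<notin> B"
      using assms(1) independent_insertI span_base by blast+
    then have "card (insert v B) \<le> card B0"
      using independent_span_bound[OF \<open>finite B0\<close>] \<open>UNIV \<subseteq> span B0\<close> by blast
    with \<open>v \<notin> B\<close> \<open>finite B\<close> \<open>card B0 = card B\<close> show False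
      by simp
  qed
  then show ?thesis
    by blast
qed

lemma bij_lincomb3:
  assumes "dim UNIV = 3" and "inj (lincomb3 scale a b c)"
  shows "bij (lincomb3 scale a b c)"
proof -
  interpret vector_space_pair kscale3 scale
    by (intro vector_space_pair.intro vector_space_kscale3 vector_space_axioms)
  have "independent {a, b, c}" and "card {a, b, c} = 3"
    using assms(2) by (auto simp: inj_lincomb3_iff)
  then have "span {a, b, c} = UNIV"
    using assms(1) by (intro span_eq_UNIV_if_card_eq_dim) simp_all
  moreover have "span {a, b, c} \<subseteq> range (lincomb3 scale a b c)"
  proof (rule span_minimal)
    have "lincomb3 scale a b c (1, 0, 0) = a" "lincomb3 scale a b c (0, 1, 0) = b"
      "lincomb3 scale a b c (0, 0, 1) = c"
      by simp_all
    then show "{a, b, c} \<subseteq> range (lincomb3 scale a b c)"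
      by (metis empty_subsetI insert_subset rangeI)
    show "subspace (range (lincomb3 scale a b c))"
      by (rule linear_subspace_image[OF linear_lincomb3 vs1.subspace_UNIV])
  qed
  ultimately show ?thesis
    using assms(2) by (auto simp: bij_def)
qed

lemma inj_lincomb3_exists:
  assumes "dim UNIV = 3"
  obtains a b c where "inj (lincomb3 scale a b c)"
proof -
  obtain B where "independent B" and "card B = 3"
    using basis_exists[of UNIV] assms by metis
  then obtain a b c where "independent {a, b, c}" and "distinct [a, b, c]"
    by (auto simp: card_3_iff)
  then show thesis
    using that inj_lincomb3_iff by blast
qed

lemma isomorphic_algebras_if_bij_lincomb3:
  assumes "bij (lincomb3 scale a b c)"
    and "\<And>p q. br (lincomb3 scale a b c p) (lincomb3 scale a b c q) = lincomb3 scale a b c (B p q)"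
  shows "isomorphic_algebras scale br kscale3 B"
proof (rule isomorphic_algebras_sym)
  show "isomorphic_algebras kscale3 B scale br"
    using linear_lincomb3 assms unfolding isomorphic_algebras_def algebra_iso_def by metis
qed

lemma isomorphic_abelian3:
  assumes "dim UNIV = 3" and "\<And>x y. br x y = 0"
  shows "isomorphic_algebras scale br kscale3 abelian3"
proof -
  obtain a b c where "inj (lincomb3 scale a b c)"
    using inj_lincomb3_exists assms(1) by blast
  show ?thesis
  proof (rule isomorphic_algebras_if_bij_lincomb3)
    show "bij (lincomb3 scale a b c)"
      using bij_lincomb3 assms(1) \<open>inj (lincomb3 scale a b c)\<close> by blast
    show "br (lincomb3 scale a b c p) (lincomb3 scale a b c q) = lincomb3 scale a b c (abelian3 p q)"
      for p q
      by (simp add: assms(2) abelian3_def zero_prod_def)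
  qed
qed

end

locale acaa =
  fixes sc :: "'k::field \<Rightarrow> 'v::ab_group_add \<Rightarrow> 'v" and br :: "'v \<Rightarrow> 'v \<Rightarrow> 'v"
  assumes acaa_algebra: "acaa_algebra sc br"
begin

sublocale vector_space sc
  using acaa_algebra by (simp add: acaa_algebra_def)

lemma bracket_linear_right: "Vector_Spaces.linear sc sc (br x)"
  and bracket_linear_left: "Vector_Spaces.linear sc sc (\<lambda>x. br x y)"
  using acaa_algebra unfolding acaa_algebra_def bilinear_wrt_def by blast+

lemma bracket_swap: "br x y = - br y x"
  and bracket_cyclic: "br x (br y z) = br y (br z x)"
  using acaa_algebra unfolding acaa_algebra_def by blast+

lemma bracket_lincomb3_left:
  "br (lincomb3 sc a b c p) w = lincomb3 sc (br a w) (br b w) (br c w) p"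
proof -
  interpret Vector_Spaces.linear sc sc "\<lambda>x. br x w"
    by (rule bracket_linear_left)
  show ?thesis
    by (cases p) (simp add: add scale)
qed

lemma bracket_lincomb3_right:
  "br w (lincomb3 sc a b c p) = lincomb3 sc (br w a) (br w b) (br w c) p"
proof -
  interpret Vector_Spaces.linear sc sc "br w"
    by (rule bracket_linear_right)
  show ?thesis
    by (cases p) (simp add: add scale)
qed

lemma bracket_zero_right: "br x 0 = 0"
  and bracket_minus_right: "br x (- y) = - br x y"
proof -
  interpret Vector_Spaces.linear sc sc "br x"
    by (rule bracket_linear_right)
  show "br x 0 = 0" "br x (- y) = - br x y"
    by (simp_all add: neg)
qed

lemma bracket_self:
  assumes "(2::'k) \<noteq> 0"
  shows "br x x = 0"
  using assms bracket_swap by (rule eq_neg_self_imp_zero)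

lemma bracket_bracket_self:
  assumes "(2::'k) \<noteq> 0"
  shows "br x (br x y) = 0"
proof (rule eq_neg_self_imp_zero[OF assms])
  have "br x (br x y) = br x (br y x)"
    by (rule bracket_cyclic)
  also have "\<dots> = br x (- br x y)"
    by (simp only: bracket_swap[of y x])
  also have "\<dots> = - br x (br x y)"
    by (rule bracket_minus_right)
  finally show "br x (br x y) = - br x (br x y)" .
qed

lemma heisenberg_brackets:
  assumes "(2::'k) \<noteq> 0" and "c = br a b"
  shows "br a a = 0" "br a b = c" "br a c = 0"
    and "br b a = - c" "br b b = 0" "br b c = 0"
    and "br c a = 0" "br c b = 0" "br c c = 0"
proof -
  have "br a c = 0"
    unfolding assms(2) by (rule bracket_bracket_self[OF assms(1)])
  have "br b c = - br b (br b a)"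
    by (simp only: assms(2) bracket_swap[of a b] bracket_minus_right)
  then have "br b c = 0"
    by (simp add: bracket_bracket_self[OF assms(1)])
  with \<open>br a c = 0\<close> show
    "br a a = 0" "br a b = c" "br a c = 0"
    "br b a = - c" "br b b = 0" "br b c = 0"
    "br c a = 0" "br c b = 0" "br c c = 0"
    using bracket_self[OF assms(1)] bracket_swap[of b a] bracket_swap[of c a] bracket_swap[of c b]
    by (simp_all add: assms(2))
qed

lemma inj_lincomb3_heisenberg:
  assumes "(2::'k) \<noteq> 0" and "br a b \<noteq> 0"
  shows "inj (lincomb3 sc a b (br a b))"
proof -
  define c where "c = br a b"
  note brackets = heisenberg_brackets[OF assms(1) c_def]
  have "p = 0" if "lincomb3 sc a b c p = 0" for p
  proof -
    obtain x y z where p: "p = (x, y, z)"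
      by (metis prod.exhaust)
    have "sc y c = br a (lincomb3 sc a b c p)"
      unfolding p bracket_lincomb3_right by (simp add: brackets)
    also have "\<dots> = 0"
      using that by (simp add: bracket_zero_right)
    finally have "y = 0"
      using assms(2) by (simp add: c_def)
    have "sc x c = - br b (lincomb3 sc a b c p)"
      unfolding p bracket_lincomb3_right by (simp add: brackets)
    also have "\<dots> = 0"
      using that by (simp add: bracket_zero_right)
    finally have "x = 0"
      using assms(2) by (simp add: c_def)
    with \<open>y = 0\<close> that assms(2) show ?thesis
      by (simp add: p c_def zero_prod_def)
  qed
  then show ?thesis
    unfolding c_def by (simp add: inj_lincomb3_iff_eq_0)
qed

lemma bracket_lincomb3_heisenberg:
  assumes "(2::'k) \<noteq> 0" and "c = br a b"
  shows "br (lincomb3 sc a b c p) (lincomb3 sc a b c q) = lincomb3 sc a b c (heis3 p q)"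
  unfolding bracket_lincomb3_left bracket_lincomb3_right heisenberg_brackets[OF assms]
  by (cases p; cases q) (simp add: heis3_def scale_left_diff_distrib mult.commute)

lemma isomorphic_heis3:
  assumes "(2::'k) \<noteq> 0" and "dim UNIV = 3" and "br a b \<noteq> 0"
  shows "isomorphic_algebras sc br kscale3 heis3"
proof (rule isomorphic_algebras_if_bij_lincomb3)
  show "bij (lincomb3 sc a b (br a b))"
    using bij_lincomb3 assms(2) inj_lincomb3_heisenberg[OF assms(1,3)] by blast
  show "br (lincomb3 sc a b (br a b) p) (lincomb3 sc a b (br a b) q) =
      lincomb3 sc a b (br a b) (heis3 p q)" for p q
    by (rule bracket_lincomb3_heisenberg[OF assms(1) refl])
qed

end

theorem mainTheorem3:
  fixes sc :: "'k::field_char_0 \<Rightarrow> 'v::ab_group_add \<Rightarrow> 'v"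
    and br :: "'v \<Rightarrow> 'v \<Rightarrow> 'v"
  assumes "acaa_algebra sc br"
    and "vector_space.dim sc (UNIV :: 'v set) = 3"
  shows "isomorphic_algebras sc br kscale3 abelian3 \<or>
         isomorphic_algebras sc br kscale3 heis3"
proof -
  interpret acaa sc br
    by (rule acaa.intro) fact
  show ?thesis
  proof (cases "\<forall>x y. br x y = 0")
    case True
    then show ?thesis
      using isomorphic_abelian3 assms(2) by blast
  next
    case False
    then obtain a b where "br a b \<noteq> 0"
      by blast
    then show ?thesis
      using isomorphic_heis3 assms(2) by simp
  qed
qed

end
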